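(* Consider the finite-dimensional problem (P) described in the context. (1) If additionally $\mathbf{x}^\downarrow=0$ is imposed, then (P) reduces to a mixed-integer linear program: all its constraints become mixed-integer linear. (2) Problem (P) reduces to a linear program, in which the constraints can be equivalently expressed as linear constraints in continuous variables only, in each of the following cases: $\mathbf{x}^0\le0$ is additionally imposed; or $K=1$; or $\eta^{c}=\eta^{d}=1$.
   Context: Let $K$ be a positive integer, $\Delta t>0$, $T=K\Delta t$, $\mathcal{K}=\{1,\dots,K\}$, $0\le\underline y\le\bar y$, $\underline x\le0\le\bar x$, efficiencies $\eta^{c},\eta^{d}\in(0,1]$, $\Delta\eta=1/\eta^{d}-\eta^{c}$, $y_0\ge0$ and $\gamma\in[0,T]$. Let $c$ and $\phi$ be real-valued cost functions. Problem (P) minimizes $c(\mathbf{x}^0,\mathbf{x}^\uparrow,\mathbf{x}^\downarrow)+\phi(\mathbf{x}^0,\mathbf{x}^\uparrow,\mathbf{x}^\downarrow,y_0)$. Its variables are $\mathbf{x}^0\in\mathbb{R}^K$; $\mathbf{x}^\uparrow,\mathbf{x}^\downarrow\in\mathbb{R}^K_+$; $\boldsymbol\alpha,\boldsymbol\beta\in\mathbb{R}^K$; $\underline{\boldsymbol\lambda},\bar{\boldsymbol\lambda}\in\mathbb{R}^K_+$; $\underline{\boldsymbol\Lambda}_k\in\mathbb{R}^k_+$ and $\bar{\boldsymbol\Lambda}_k\in\mathbb{R}^k$ for $k\in\mathcal{K}$; and $\upsilon_{1k},\upsilon_{2k}\in\{0,1\}$ for $k\le K-1$. Its constraints are: (a)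 $x^0_k+x^\uparrow_k\le\bar x$ and $x^0_k-x^\downarrow_k\ge\underline x$; (b) $y_0-\gamma\underline\lambda_k-\Delta t\sum_{l\le k}(\alpha_l+\underline\Lambda_{kl})\ge\underline y$; (c) $\alpha_k\ge\eta^{c}x^0_k$, $\alpha_k\ge x^0_k/\eta^{d}$, $\beta_k\ge\eta^{c}(x^0_k+x^\uparrow_k)$ and $\beta_k\ge(x^0_k+x^\uparrow_k)/\eta^{d}$; (d) $\underline\Lambda_{kl}+\underline\lambda_k+\alpha_l-\beta_l\ge0$ for $l\le k$; (e) $y_0+\gamma\bar\lambda_k+\Delta t\sum_{l\le k}\bar\Lambda_{kl}\le\bar y$; (f) $\bar\Lambda_{kk}\ge-\eta^{c}x^0_k$, $\bar\Lambda_{kk}\ge\eta^{c}(x^\downarrow_k-x^0_k)-\bar\lambda_k$ and $\bar\Lambda_{kk}\ge0$; (g) for $k\le K-1$: $(1-\upsilon_{1k})\underline x\le x^0_k-x^\downarrow_k\le\upsilon_{1k}\bar x$ and $\upsilon_{2k}\underline x\le x^0_k\le(1-\upsilon_{2k})\bar x$; (h) for $l<k$: - $\bar\Lambda_{kl}\ge\frac{x^\downarrow_l-x^0_l}{\eta^{d}}-\bar\lambda_k+(1-\upsilon_{1l})\Delta\eta\,\underline x$, - $\bar\Lambda_{kl}\ge-\frac{x^0_l}{\eta^{d}}+\upsilon_{2l}\Delta\eta\,\underline x$, - $\bar\Lambda_{kl}\ge\eta^{c}(x^\downarrow_l-x^0_l)-\bar\lambda_k-\upsilon_{1l}\Delta\eta\,\bar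 x$, - $\bar\Lambda_{kl}\ge-\eta^{c}x^0_l-(1-\upsilon_{2l})\Delta\eta\,\bar x$; (i) for $l<k$: the bilinear constraint $\bar\Lambda_{kl}x^\downarrow_l+\bar\lambda_kx^0_l\ge\upsilon_{2l}\frac{\underline x(\bar x-\underline x)}{\eta^{d}}-\upsilon_{1l}\frac{\bar x^2}{4\eta^{d}}$. All unqualified indices range over $\mathcal{K}$. *)

theory Defs
  imports Main "HOL-Library.Extended_Real"
begin

text \<open>Time steps are indexed by 1..K. Vectors are functions nat => real; only the entries
  with index in {1..K} are meaningful. Lower-triangular families Lambda_k (k in 1..K) are
  encoded as functions nat => nat => real, entry (k,l) with 1 <= l <= k.
  Binary variables upsilon are real-valued and constrained to {0,1}.\<close>

definition P_constraints ::
  "nat \<Rightarrow> real \<Rightarrow> real \<Rightarrow> real \<Rightarrow> real \<Rightarrow> real \<Rightarrow> real \<Rightarrow> real \<Rightarrow> real \<Rightarrow> real \<Rightarrow>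
   (nat \<Rightarrow> real) \<Rightarrow> (nat \<Rightarrow> real) \<Rightarrow> (nat \<Rightarrow> real) \<Rightarrow>
   (nat \<Rightarrow> real) \<Rightarrow> (nat \<Rightarrow> real) \<Rightarrow> (nat \<Rightarrow> real) \<Rightarrow> (nat \<Rightarrow> real) \<Rightarrow>
   (nat \<Rightarrow> nat \<Rightarrow> real) \<Rightarrow> (nat \<Rightarrow> nat \<Rightarrow> real) \<Rightarrow> (nat \<Rightarrow> real) \<Rightarrow> (nat \<Rightarrow> real) \<Rightarrow> bool"
where
  "P_constraints K dt ylo yhi xlo xhi ec ed y0 \<gamma> x0 xup xdn \<alpha> \<beta> lamlo lamhi Lamlo Lamhi u1 u2 \<longleftrightarrow>
    (let de = 1 / ed - ec in
     (\<forall>k\<in>{1..K}. xup k \<ge> 0 \<and> xdn k \<ge> 0 \<and> lamlo k \<ge> 0 \<and> lamhi k \<ge> 0) \<and>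
     (\<forall>k\<in>{1..K}. \<forall>l\<in>{1..k}. Lamlo k l \<ge> 0) \<and>
     \<comment> \<open>(a)\<close>
     (\<forall>k\<in>{1..K}. x0 k + xup k \<le> xhi \<and> x0 k - xdn k \<ge> xlo) \<and>
     \<comment> \<open>(b)\<close>
     (\<forall>k\<in>{1..K}. y0 - \<gamma> * lamlo k - dt * (\<Sum>l=1..k. \<alpha> l + Lamlo k l) \<ge> ylo) \<and>
     \<comment> \<open>(c)\<close>
     (\<forall>k\<in>{1..K}. \<alpha> k \<ge> ec * x0 k \<and> \<alpha> k \<ge> x0 k / ed \<and>
        \<beta> k \<ge> ec * (x0 k + xup k) \<and> \<beta> k \<ge> (x0 k + xup k) / ed) \<and>
     \<comment> \<open>(d)\<close>
     (\<forall>k\<in>{1..K}. \<forall>l\<in>{1..k}. Lamlo k l + lamlo k + \<alpha> l - \<beta> l \<ge> 0) \<and>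
     \<comment> \<open>(e)\<close>
     (\<forall>k\<in>{1..K}. y0 + \<gamma> * lamhi k + dt * (\<Sum>l=1..k. Lamhi k l) \<le> yhi) \<and>
     \<comment> \<open>(f)\<close>
     (\<forall>k\<in>{1..K}. Lamhi k k \<ge> - ec * x0 k \<and> Lamhi k k \<ge> ec * (xdn k - x0 k) - lamhi k
        \<and> Lamhi k k \<ge> 0) \<and>
     \<comment> \<open>(g)\<close>
     (\<forall>k\<in>{1..K-1}. u1 k \<in> {0,1} \<and> u2 k \<in> {0,1} \<and>
        (1 - u1 k) * xlo \<le> x0 k - xdn k \<and> x0 k - xdn k \<le> u1 k * xhi \<and>
        u2 k * xlo \<le> x0 k \<and> x0 k \<le> (1 - u2 k) * xhi) \<and>
     \<comment> \<open>(h)\<close>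
     (\<forall>k\<in>{1..K}. \<forall>l\<in>{1..<k}.
        Lamhi k l \<ge> (xdn l - x0 l) / ed - lamhi k + (1 - u1 l) * de * xlo \<and>
        Lamhi k l \<ge> - x0 l / ed + u2 l * de * xlo \<and>
        Lamhi k l \<ge> ec * (xdn l - x0 l) - lamhi k - u1 l * de * xhi \<and>
        Lamhi k l \<ge> - ec * x0 l - (1 - u2 l) * de * xhi) \<and>
     \<comment> \<open>(i)\<close>
     (\<forall>k\<in>{1..K}. \<forall>l\<in>{1..<k}.
        Lamhi k l * xdn l + lamhi k * x0 l \<ge>
          u2 l * (xlo * (xhi - xlo) / ed) - u1 l * (xhi ^ 2 / (4 * ed))))"

text \<open>Projection of the feasible set of (P) onto the variables (x^0, x^up, x^down) on which
  the objective depends; entries outside 1..K are normalised to 0.\<close>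

definition P_feasible_set ::
  "nat \<Rightarrow> real \<Rightarrow> real \<Rightarrow> real \<Rightarrow> real \<Rightarrow> real \<Rightarrow> real \<Rightarrow> real \<Rightarrow> real \<Rightarrow> real \<Rightarrow>
   ((nat \<Rightarrow> real) \<times> (nat \<Rightarrow> real) \<times> (nat \<Rightarrow> real)) set"
where
  "P_feasible_set K dt ylo yhi xlo xhi ec ed y0 \<gamma> =
    {(x0, xup, xdn). (\<forall>j. j \<notin> {1..K} \<longrightarrow> x0 j = 0 \<and> xup j = 0 \<and> xdn j = 0) \<and>
      (\<exists>\<alpha> \<beta> lamlo lamhi Lamlo Lamhi u1 u2.
         P_constraints K dt ylo yhi xlo xhi ec ed y0 \<gamma> x0 xup xdn \<alpha> \<beta> lamlo lamhi Lamlo Lamhi u1 u2)}"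

definition milp_representable ::
  "nat \<Rightarrow> ((nat \<Rightarrow> real) \<times> (nat \<Rightarrow> real) \<times> (nat \<Rightarrow> real)) set \<Rightarrow> bool" where
  "milp_representable K S \<longleftrightarrow>
    (\<exists>(m::nat) (p::nat) (q::nat) (A0::nat\<Rightarrow>nat\<Rightarrow>real) (Au::nat\<Rightarrow>nat\<Rightarrow>real) (Ad::nat\<Rightarrow>nat\<Rightarrow>real)
       (B::nat\<Rightarrow>nat\<Rightarrow>real) (C::nat\<Rightarrow>nat\<Rightarrow>real) (b::nat\<Rightarrow>real).
      S = {(x0, xup, xdn). (\<forall>j. j \<notin> {1..K} \<longrightarrow> x0 j = 0 \<and> xup j = 0 \<and> xdn j = 0) \<and>
        (\<exists>(z::nat\<Rightarrow>real) (w::nat\<Rightarrow>real). (\<forall>j<q. w j \<in> {0,1}) \<and>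
          (\<forall>i<m. (\<Sum>j=1..K. A0 i j * x0 j + Au i j * xup j + Ad i j * xdn j)
                 + (\<Sum>j<p. B i j * z j) + (\<Sum>j<q. C i j * w j) \<le> b i))})"

definition lp_representable ::
  "nat \<Rightarrow> ((nat \<Rightarrow> real) \<times> (nat \<Rightarrow> real) \<times> (nat \<Rightarrow> real)) set \<Rightarrow> bool" where
  "lp_representable K S \<longleftrightarrow>
    (\<exists>(m::nat) (p::nat) (A0::nat\<Rightarrow>nat\<Rightarrow>real) (Au::nat\<Rightarrow>nat\<Rightarrow>real) (Ad::nat\<Rightarrow>nat\<Rightarrow>real)
       (B::nat\<Rightarrow>nat\<Rightarrow>real) (b::nat\<Rightarrow>real).
      S = {(x0, xup, xdn). (\<forall>j. j \<notin> {1..K} \<longrightarrow> x0 j = 0 \<and> xup j = 0 \<and> xdn j = 0) \<and>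
        (\<exists>(z::nat\<Rightarrow>real).
          (\<forall>i<m. (\<Sum>j=1..K. A0 i j * x0 j + Au i j * xup j + Ad i j * xdn j)
                 + (\<Sum>j<p. B i j * z j) \<le> b i))})"

end

theory Submission
  imports Defs "HOL-Library.Nat_Bijection"
begin

text \<open>The only non-linear ingredients of (P) are the binary indicators \<upsilon> and the bilinear
  constraint (i). If x^down = 0, lowering lambda-bar to 0 costs nothing and makes (i) trivial,
  which leaves a mixed-integer linear system. If x^0 \<le> 0, the indicators may be fixed to
  \<upsilon>1 = 0, \<upsilon>2 = 1, and capping lambda-bar at -x-underbar / \<eta>^d makes (i) a consequence of (h).
  If \<eta>^c = \<eta>^d = 1, constraint (h) no longer involves the indicators; reading them off the signs
  of x^0 - x^down and x^0 and capping lambda-bar at x-bar - x-underbar again makes (i) redundant.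
  For K = 1, constraints (g)-(i) are void. What remains in each case is a finite system of
  linear inequalities, and such a system is brought into the matrix form of
  milp_representable and lp_representable by interleaving all variables into one sequence.\<close>

section \<open>Polyhedral predicates on sequences\<close>

text \<open>Coefficients vanish from N on; quantifying over all M \<ge> N lets forms of different
  lengths be combined.\<close>

definition affine_form :: "((nat \<Rightarrow> real) \<Rightarrow> real) \<Rightarrow> bool" where
  "affine_form f \<longleftrightarrow> (\<exists>c a N. \<forall>M\<ge>N. \<forall>v. f v = c + (\<Sum>j<M. a j * v j))"

definition polyhedral :: "((nat \<Rightarrow> real) \<Rightarrow> bool) \<Rightarrow> bool" where
  "polyhedral P \<longleftrightarrow>
     (\<exists>(m::nat) A b N. \<forall>M\<ge>N. \<forall>v. P v \<longleftrightarrow> (\<forall>i<m. (\<Sum>j<M. A i j * v j) \<le> b i))"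

lemma affine_form_const: "affine_form (\<lambda>v. c)"
  unfolding affine_form_def by (rule exI[of _ c], rule exI[of _ "\<lambda>_. 0"]) auto

lemma affine_form_coord: "affine_form (\<lambda>v. v j)"
  unfolding affine_form_def
proof (intro exI allI impI)
  fix M :: nat and v :: "nat \<Rightarrow> real"
  assume "Suc j \<le> M"
  have "(\<Sum>i<M. (if i = j then 1 else 0) * v i) = (\<Sum>i<M. if i = j then v i else 0)"
    by (rule sum.cong) auto
  with \<open>Suc j \<le> M\<close> show "v j = 0 + (\<Sum>i<M. (if i = j then 1 else 0) * v i)"
    by simp
qed

lemma affine_form_add:
  assumes "affine_form f" "affine_form g"
  shows "affine_form (\<lambda>v. f v + g v)"
proof -
  obtain c1 a1 N1 where f: "\<forall>M\<ge>N1. \<forall>v. f v = c1 + (\<Sum>j<M. a1 j * v j)"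
    using assms(1) affine_form_def by auto
  obtain c2 a2 N2 where g: "\<forall>M\<ge>N2. \<forall>v. g v = c2 + (\<Sum>j<M. a2 j * v j)"
    using assms(2) affine_form_def by auto
  show ?thesis
    unfolding affine_form_def
  proof (intro exI allI impI)
    fix M :: nat and v :: "nat \<Rightarrow> real"
    assume "max N1 N2 \<le> M"
    then have "f v = c1 + (\<Sum>j<M. a1 j * v j)" "g v = c2 + (\<Sum>j<M. a2 j * v j)"
      using f g by auto
    then show "f v + g v = (c1 + c2) + (\<Sum>j<M. (a1 j + a2 j) * v j)"
      by (simp add: sum.distrib distrib_right)
  qed
qed

lemma affine_form_scale:
  assumes "affine_form f"
  shows "affine_form (\<lambda>v. c * f v)"
proof -
  obtain c1 a1 N where f: "\<forall>M\<ge>N. \<forall>v. f v = c1 + (\<Sum>j<M. a1 j * v j)"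
    using assms affine_form_def by auto
  show ?thesis
    unfolding affine_form_def
  proof (intro exI allI impI)
    fix M :: nat and v :: "nat \<Rightarrow> real"
    assume "N \<le> M"
    with f show "c * f v = c * c1 + (\<Sum>j<M. (c * a1 j) * v j)"
      by (simp add: sum_distrib_left distrib_left mult.assoc)
  qed
qed

lemma affine_form_minus: "affine_form f \<Longrightarrow> affine_form (\<lambda>v. - f v)"
  using affine_form_scale[of f "-1"] by simp

lemma affine_form_diff: "affine_form f \<Longrightarrow> affine_form g \<Longrightarrow> affine_form (\<lambda>v. f v - g v)"
  using affine_form_add[of f "\<lambda>v. - g v"] affine_form_minus[of g] by simp

lemma affine_form_mult_right: "affine_form f \<Longrightarrow> affine_form (\<lambda>v. f v * c)"
  using affine_form_scale[of f c] by (simp add: mult.commute)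

lemma affine_form_divide: "affine_form f \<Longrightarrow> affine_form (\<lambda>v. f v / c)"
  using affine_form_scale[of f "1 / c"] by simp

lemma affine_form_sum:
  assumes "\<And>l. l \<in> A \<Longrightarrow> affine_form (f l)"
  shows "affine_form (\<lambda>v. \<Sum>l\<in>A. f l v)"
proof (cases "finite A")
  case True
  from this assms show ?thesis
  proof (induction A rule: finite_induct)
    case empty
    show ?case using affine_form_const[of 0] by simp
  next
    case (insert x F)
    then show ?case using affine_form_add[of "f x" "\<lambda>v. \<Sum>l\<in>F. f l v"] by simp
  qed
next
  case False
  then show ?thesis using affine_form_const[of 0] by simp
qed

lemma polyhedral_True: "polyhedral (\<lambda>v. True)"
  unfolding polyhedral_def by (rule exI[of _ 0]) auto

lemma polyhedral_le:
  assumes "affine_form f" "affine_form g"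
  shows "polyhedral (\<lambda>v. f v \<le> g v)"
proof -
  obtain c a N where fg: "\<forall>M\<ge>N. \<forall>v. f v - g v = c + (\<Sum>j<M. a j * v j)"
    using affine_form_diff[OF assms] affine_form_def by auto
  show ?thesis
    unfolding polyhedral_def
  proof (intro exI allI impI)
    fix M :: nat and v :: "nat \<Rightarrow> real"
    assume "N \<le> M"
    then have "f v - g v = c + (\<Sum>j<M. a j * v j)"
      using fg by blast
    then show "f v \<le> g v \<longleftrightarrow> (\<forall>i<1::nat. (\<Sum>j<M. a j * v j) \<le> - c)"
      by auto
  qed
qed

lemma all_less_add_split:
  "(\<forall>i<m1 + m2. if i < m1 then X i else Y (i - m1)) \<longleftrightarrow> (\<forall>i<m1. X i) \<and> (\<forall>i<m2. Y (i::nat))"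
proof safe
  fix i
  assume "\<forall>i<m1 + m2. if i < m1 then X i else Y (i - m1)" "i < m2"
  then have "if m1 + i < m1 then X (m1 + i) else Y (m1 + i - m1)"
    by (metis add_less_cancel_left)
  then show "Y i" by simp
qed auto

lemma polyhedral_conj:
  assumes "polyhedral P" "polyhedral Q"
  shows "polyhedral (\<lambda>v. P v \<and> Q v)"
proof -
  obtain m1 A1 b1 N1 where P: "\<forall>M\<ge>N1. \<forall>v. P v \<longleftrightarrow> (\<forall>i<(m1::nat). (\<Sum>j<M. A1 i j * v j) \<le> b1 i)"
    using assms(1) polyhedral_def by auto
  obtain m2 A2 b2 N2 where Q: "\<forall>M\<ge>N2. \<forall>v. Q v \<longleftrightarrow> (\<forall>i<(m2::nat). (\<Sum>j<M. A2 i j * v j) \<le> b2 i)"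
    using assms(2) polyhedral_def by auto
  define A where "A i = (if i < m1 then A1 i else A2 (i - m1))" for i
  define b where "b i = (if i < m1 then b1 i else b2 (i - m1))" for i
  show ?thesis
    unfolding polyhedral_def
  proof (intro exI allI impI)
    fix M :: nat and v :: "nat \<Rightarrow> real"
    assume M: "max N1 N2 \<le> M"
    have "(\<forall>i<m1 + m2. (\<Sum>j<M. A i j * v j) \<le> b i) \<longleftrightarrow>
        (\<forall>i<m1 + m2. if i < m1 then (\<Sum>j<M. A1 i j * v j) \<le> b1 i
                       else (\<Sum>j<M. A2 (i - m1) j * v j) \<le> b2 (i - m1))"
      by (intro all_cong) (simp add: A_def b_def)
    also have "\<dots> \<longleftrightarrow> (\<forall>i<m1. (\<Sum>j<M. A1 i j * v j) \<le> b1 i) \<and> (\<forall>i<m2. (\<Sum>j<M. A2 i j * v j) \<le> b2 i)"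
      by (rule all_less_add_split)
    also have "\<dots> \<longleftrightarrow> P v \<and> Q v"
      using P Q M by auto
    finally show "P v \<and> Q v \<longleftrightarrow> (\<forall>i<m1 + m2. (\<Sum>j<M. A i j * v j) \<le> b i)" ..
  qed
qed

lemma polyhedral_ball:
  assumes "finite A" "\<And>x. x \<in> A \<Longrightarrow> polyhedral (P x)"
  shows "polyhedral (\<lambda>v. \<forall>x\<in>A. P x v)"
  using assms by (induction A rule: finite_induct) (auto intro: polyhedral_True polyhedral_conj)

lemma polyhedral_eq:
  assumes "affine_form f" "affine_form g"
  shows "polyhedral (\<lambda>v. f v = g v)"
  using polyhedral_conj[OF polyhedral_le[OF assms] polyhedral_le[OF assms(2,1)]]
  by (simp add: order_eq_iff)

lemmas polyhedral_intros = polyhedral_conj polyhedral_ball polyhedral_le polyhedral_eq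
  affine_form_const affine_form_coord affine_form_add affine_form_diff affine_form_minus
  affine_form_scale affine_form_mult_right affine_form_divide affine_form_sum

text \<open>Interleaving lets one polyhedral predicate constrain the three decision vectors, the
  continuous auxiliary variables and the binary ones simultaneously.\<close>

definition interleave5 :: "(nat \<Rightarrow> real) list \<Rightarrow> nat \<Rightarrow> real" where
  "interleave5 vs n = (vs ! (n mod 5)) (n div 5)"

definition coord5 :: "nat \<Rightarrow> (nat \<Rightarrow> real) \<Rightarrow> nat \<Rightarrow> real" where
  "coord5 r v j = v (5 * j + r)"

lemma coord5_interleave5: "r < 5 \<Longrightarrow> coord5 r (interleave5 vs) = vs ! r"
  by (simp add: fun_eq_iff coord5_def interleave5_def)

lemma interleave5_nth: "r < 5 \<Longrightarrow> interleave5 vs (5 * t + r) = (vs ! r) t"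
  by (simp add: interleave5_def)

lemma sum_interleave5:
  "(\<Sum>j<5 * N. g j * interleave5 [v0, v1, v2, v3, v4] j) =
     (\<Sum>t<N. g (5 * t) * v0 t) + (\<Sum>t<N. g (5 * t + 1) * v1 t) + (\<Sum>t<N. g (5 * t + 2) * v2 t)
     + (\<Sum>t<N. g (5 * t + 3) * v3 t) + (\<Sum>t<N. g (5 * t + 4) * v4 t)"
proof -
  let ?vs = "[v0, v1, v2, v3, v4]"
  have "(\<Sum>j<5 * N. g j * interleave5 ?vs j) =
      (\<Sum>t<N. \<Sum>j\<in>{t * 5..<t * 5 + 5}. g j * interleave5 ?vs j)"
    by (simp add: sum.nat_group mult.commute)
  also have "\<dots> = (\<Sum>t<N. \<Sum>r<5. g (5 * t + r) * (?vs ! r) t)"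
  proof (rule sum.cong[OF refl])
    fix t :: nat
    have "(\<Sum>j\<in>{t * 5..<t * 5 + 5}. g j * interleave5 ?vs j) =
        (\<Sum>r<5. g (5 * t + r) * interleave5 ?vs (5 * t + r))"
      by (simp add: sum.atLeastLessThan_shift_0[of _ "t * 5"] atLeast0LessThan mult.commute)
    also have "\<dots> = (\<Sum>r<5. g (5 * t + r) * (?vs ! r) t)"
      by (rule sum.cong) (simp_all add: interleave5_nth)
    finally show "(\<Sum>j\<in>{t * 5..<t * 5 + 5}. g j * interleave5 ?vs j) = \<dots>" .
  qed
  also have "\<dots> = (\<Sum>t<N. g (5 * t) * v0 t + g (5 * t + 1) * v1 t + g (5 * t + 2) * v2 t
                    + g (5 * t + 3) * v3 t + g (5 * t + 4) * v4 t)"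
    by (simp add: eval_nat_numeral add.assoc)
  finally show ?thesis by (simp add: sum.distrib)
qed

abbreviation vanishes_outside ::
  "nat \<Rightarrow> (nat \<Rightarrow> real) \<Rightarrow> (nat \<Rightarrow> real) \<Rightarrow> (nat \<Rightarrow> real) \<Rightarrow> bool" where
  "vanishes_outside K x0 xup xdn \<equiv> \<forall>j. j \<notin> {1..K} \<longrightarrow> x0 j = 0 \<and> xup j = 0 \<and> xdn j = 0"

lemma polyhedral_matrix_form:
  assumes "polyhedral (\<lambda>v. S (coord5 0 v) (coord5 1 v) (coord5 2 v) (coord5 3 v) (coord5 4 v))"
  obtains m A0 Au Ad B p C b where
    "\<And>x0 xu xd z w. vanishes_outside K x0 xu xd \<Longrightarrow>
       S x0 xu xd z w \<longleftrightarrow>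
       (\<forall>i<(m::nat). (\<Sum>j=1..K. A0 i j * x0 j + Au i j * xu j + Ad i j * xd j)
          + (\<Sum>j<(p::nat). B i j * z j) + (\<Sum>j<p. C i j * w j) \<le> b i)"
proof -
  obtain m A b N where S: "\<forall>M\<ge>N. \<forall>v.
      S (coord5 0 v) (coord5 1 v) (coord5 2 v) (coord5 3 v) (coord5 4 v) \<longleftrightarrow>
      (\<forall>i<(m::nat). (\<Sum>j<M. A i j * v j) \<le> b i)"
    using assms unfolding polyhedral_def by blast
  define p where "p = max N (K + 1)"
  show thesis
  proof (rule that)
    fix x0 xu xd z w :: "nat \<Rightarrow> real"
    assume supp: "vanishes_outside K x0 xu xd"
    let ?v = "interleave5 [x0, xu, xd, z, w]"
    have N: "N \<le> 5 * p" unfolding p_def by (simp add: max_def)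
    have "S x0 xu xd z w \<longleftrightarrow> (\<forall>i<m. (\<Sum>j<5 * p. A i j * ?v j) \<le> b i)"
      using S[rule_format, OF N, of ?v] by (simp add: coord5_interleave5)
    moreover have "(\<Sum>j<5 * p. A i j * ?v j) =
        (\<Sum>j=1..K. A i (5 * j) * x0 j + A i (5 * j + 1) * xu j + A i (5 * j + 2) * xd j)
        + (\<Sum>j<p. A i (5 * j + 3) * z j) + (\<Sum>j<p. A i (5 * j + 4) * w j)" for i
    proof -
      have "(\<Sum>j<p. A i (5 * j) * x0 j + A i (5 * j + 1) * xu j + A i (5 * j + 2) * xd j)
          = (\<Sum>j=1..K. A i (5 * j) * x0 j + A i (5 * j + 1) * xu j + A i (5 * j + 2) * xd j)"
        using supp by (intro sum.mono_neutral_right) (auto simp: p_def)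
      then show ?thesis
        by (simp add: sum_interleave5 sum.distrib)
    qed
    ultimately show "S x0 xu xd z w \<longleftrightarrow>
       (\<forall>i<m. (\<Sum>j=1..K. A i (5 * j) * x0 j + A i (5 * j + 1) * xu j + A i (5 * j + 2) * xd j)
          + (\<Sum>j<p. A i (5 * j + 3) * z j) + (\<Sum>j<p. A i (5 * j + 4) * w j) \<le> b i)"
      by simp
  qed
qed

lemma milp_representable_intro:
  assumes "polyhedral (\<lambda>v. S (coord5 0 v) (coord5 1 v) (coord5 2 v) (coord5 3 v) (coord5 4 v))"
  shows "milp_representable K {(x0, xup, xdn). vanishes_outside K x0 xup xdn \<and>
           (\<exists>z w. (\<forall>j. w j \<in> {0, 1}) \<and> S x0 xup xdn z w)}"
proof -
  obtain m A0 Au Ad B p C b where S: "\<And>x0 xu xd z w. vanishes_outside K x0 xu xd \<Longrightarrow>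
       S x0 xu xd z w \<longleftrightarrow>
       (\<forall>i<(m::nat). (\<Sum>j=1..K. A0 i j * x0 j + Au i j * xu j + Ad i j * xd j)
          + (\<Sum>j<(p::nat). B i j * z j) + (\<Sum>j<p. C i j * w j) \<le> b i)"
    using polyhedral_matrix_form[OF assms] by blast
  \<comment> \<open>Only the first p binary variables occur in the inequalities; the others may be set to 0.\<close>
  have equiv: "(\<exists>z w. (\<forall>j. w j \<in> {0, 1}) \<and> S x0 xu xd z w) \<longleftrightarrow>
        (\<exists>z w. (\<forall>j<p. w j \<in> {0, 1}) \<and>
          (\<forall>i<m. (\<Sum>j=1..K. A0 i j * x0 j + Au i j * xu j + Ad i j * xd j)
             + (\<Sum>j<p. B i j * z j) + (\<Sum>j<p. C i j * w j) \<le> b i))"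
    if supp: "vanishes_outside K x0 xu xd" for x0 xu xd
  proof
    assume "\<exists>z w. (\<forall>j<p. w j \<in> {0, 1}) \<and>
          (\<forall>i<m. (\<Sum>j=1..K. A0 i j * x0 j + Au i j * xu j + Ad i j * xd j)
             + (\<Sum>j<p. B i j * z j) + (\<Sum>j<p. C i j * w j) \<le> b i)"
    then obtain z w where w: "\<forall>j<p. w j \<in> {0, 1}" and ineq: "\<forall>i<m.
        (\<Sum>j=1..K. A0 i j * x0 j + Au i j * xu j + Ad i j * xd j)
        + (\<Sum>j<p. B i j * z j) + (\<Sum>j<p. C i j * w j) \<le> b i"
      by blast
    define w' where "w' j = (if j < p then w j else 0)" for j
    have "(\<Sum>j<p. C i j * w' j) = (\<Sum>j<p. C i j * w j)" for i
      by (rule sum.cong) (simp_all add: w'_def)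
    with ineq have "S x0 xu xd z w'" by (simp add: S[OF supp])
    moreover have "\<forall>j. w' j \<in> {0, 1}" using w by (simp add: w'_def)
    ultimately show "\<exists>z w. (\<forall>j. w j \<in> {0, 1}) \<and> S x0 xu xd z w" by blast
  next
    assume "\<exists>z w. (\<forall>j. w j \<in> {0, 1}) \<and> S x0 xu xd z w"
    then obtain z w where "\<forall>j. w j \<in> {0, 1}" "S x0 xu xd z w" by blast
    then show "\<exists>z w. (\<forall>j<p. w j \<in> {0, 1}) \<and>
          (\<forall>i<m. (\<Sum>j=1..K. A0 i j * x0 j + Au i j * xu j + Ad i j * xd j)
             + (\<Sum>j<p. B i j * z j) + (\<Sum>j<p. C i j * w j) \<le> b i)"
      unfolding S[OF supp] by blast
  qed
  have sets_eq: "{(x0, xup, xdn). vanishes_outside K x0 xup xdn \<and>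
           (\<exists>z w. (\<forall>j. w j \<in> {0, 1}) \<and> S x0 xup xdn z w)} =
      {(x0, xup, xdn). vanishes_outside K x0 xup xdn \<and>
        (\<exists>z w. (\<forall>j<p. w j \<in> {0, 1}) \<and>
          (\<forall>i<m. (\<Sum>j=1..K. A0 i j * x0 j + Au i j * xup j + Ad i j * xdn j)
             + (\<Sum>j<p. B i j * z j) + (\<Sum>j<p. C i j * w j) \<le> b i))}"
    by (simp add: set_eq_iff split_paired_All equiv del: insert_iff cong: conj_cong)
  show ?thesis
    unfolding milp_representable_def by (intro exI) (fact sets_eq)
qed

lemma lp_representable_intro:
  assumes "polyhedral (\<lambda>v. S (coord5 0 v) (coord5 1 v) (coord5 2 v) (coord5 3 v))"
  shows "lp_representable K {(x0, xup, xdn). vanishes_outside K x0 xup xdn \<and> (\<exists>z. S x0 xup xdn z)}"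
proof -
  obtain m A0 Au Ad B p C b where S: "\<And>x0 xu xd z w. vanishes_outside K x0 xu xd \<Longrightarrow>
       S x0 xu xd z \<longleftrightarrow>
       (\<forall>i<(m::nat). (\<Sum>j=1..K. A0 i j * x0 j + Au i j * xu j + Ad i j * xd j)
          + (\<Sum>j<(p::nat). B i j * z j) + (\<Sum>j<p. C i j * w j) \<le> b i)"
    using polyhedral_matrix_form[of "\<lambda>x0 xu xd z w. S x0 xu xd z", OF assms] by blast
  have equiv: "S x0 xu xd z \<longleftrightarrow>
       (\<forall>i<m. (\<Sum>j=1..K. A0 i j * x0 j + Au i j * xu j + Ad i j * xd j) + (\<Sum>j<p. B i j * z j) \<le> b i)"
    if "vanishes_outside K x0 xu xd" for x0 xu xd z
    using S[OF that, of z "\<lambda>_. 0"] by simp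
  have sets_eq: "{(x0, xup, xdn). vanishes_outside K x0 xup xdn \<and> (\<exists>z. S x0 xup xdn z)} =
      {(x0, xup, xdn). vanishes_outside K x0 xup xdn \<and>
        (\<exists>z. \<forall>i<m. (\<Sum>j=1..K. A0 i j * x0 j + Au i j * xup j + Ad i j * xdn j)
             + (\<Sum>j<p. B i j * z j) \<le> b i)}"
    by (simp add: set_eq_iff split_paired_All equiv del: insert_iff cong: conj_cong)
  show ?thesis
    unfolding lp_representable_def by (intro exI) (fact sets_eq)
qed


section \<open>The constraints of (P)\<close>

text \<open>Cantor pairing packs the continuous auxiliary variables \<alpha>, \<beta>, lambda-underbar, lambda-bar,
  Lambda-underbar, Lambda-bar of (P) into a single sequence.\<close>

definition pack_aux ::
  "(nat \<Rightarrow> real) \<Rightarrow> (nat \<Rightarrow> real) \<Rightarrow> (nat \<Rightarrow> real) \<Rightarrow> (nat \<Rightarrow> real) \<Rightarrow>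
   (nat \<Rightarrow> nat \<Rightarrow> real) \<Rightarrow> (nat \<Rightarrow> nat \<Rightarrow> real) \<Rightarrow> nat \<Rightarrow> real" where
  "pack_aux a b c d M N n = (case prod_decode n of (t, r) \<Rightarrow>
     if t = 0 then a r else if t = 1 then b r else if t = 2 then c r else if t = 3 then d r
     else case prod_decode r of (k, l) \<Rightarrow> if t = 4 then M k l else N k l)"

definition aux_vec :: "nat \<Rightarrow> (nat \<Rightarrow> real) \<Rightarrow> nat \<Rightarrow> real" where
  "aux_vec t z r = z (prod_encode (t, r))"

definition aux_mat :: "nat \<Rightarrow> (nat \<Rightarrow> real) \<Rightarrow> nat \<Rightarrow> nat \<Rightarrow> real" where
  "aux_mat t z k l = z (prod_encode (t, prod_encode (k, l)))"

lemma aux_pack_aux [simp]: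
  "aux_vec 0 (pack_aux a b c d M N) = a" "aux_vec 1 (pack_aux a b c d M N) = b"
  "aux_vec 2 (pack_aux a b c d M N) = c" "aux_vec 3 (pack_aux a b c d M N) = d"
  "aux_mat 4 (pack_aux a b c d M N) = M" "aux_mat 5 (pack_aux a b c d M N) = N"
  by (simp_all add: fun_eq_iff pack_aux_def aux_vec_def aux_mat_def)

locale storage_problem =
  fixes K :: nat and dt ylo yhi xlo xhi ec ed y0 \<gamma> :: real
  assumes xlo_nonpos: "xlo \<le> 0" and xhi_nonneg: "0 \<le> xhi"
    and ec_pos: "0 < ec" and ec_le_1: "ec \<le> 1" and ed_pos: "0 < ed" and ed_le_1: "ed \<le> 1"
    and gamma_nonneg: "0 \<le> \<gamma>"
begin

definition constraints_a_f ::
  "(nat \<Rightarrow> real) \<Rightarrow> (nat \<Rightarrow> real) \<Rightarrow> (nat \<Rightarrow> real) \<Rightarrow> (nat \<Rightarrow> real) \<Rightarrow> (nat \<Rightarrow> real) \<Rightarrow>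
   (nat \<Rightarrow> real) \<Rightarrow> (nat \<Rightarrow> real) \<Rightarrow> (nat \<Rightarrow> nat \<Rightarrow> real) \<Rightarrow> (nat \<Rightarrow> nat \<Rightarrow> real) \<Rightarrow> bool" where
  "constraints_a_f x0 xup xdn \<alpha> \<beta> lamlo lamhi Lamlo Lamhi \<longleftrightarrow>
    (\<forall>k\<in>{1..K}. xup k \<ge> 0 \<and> xdn k \<ge> 0 \<and> lamlo k \<ge> 0 \<and> lamhi k \<ge> 0) \<and>
    (\<forall>k\<in>{1..K}. \<forall>l\<in>{1..k}. Lamlo k l \<ge> 0) \<and>
    (\<forall>k\<in>{1..K}. x0 k + xup k \<le> xhi \<and> x0 k - xdn k \<ge> xlo) \<and>
    (\<forall>k\<in>{1..K}. y0 - \<gamma> * lamlo k - dt * (\<Sum>l=1..k. \<alpha> l + Lamlo k l) \<ge> ylo) \<and>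
    (\<forall>k\<in>{1..K}. \<alpha> k \<ge> ec * x0 k \<and> \<alpha> k \<ge> x0 k / ed \<and>
       \<beta> k \<ge> ec * (x0 k + xup k) \<and> \<beta> k \<ge> (x0 k + xup k) / ed) \<and>
    (\<forall>k\<in>{1..K}. \<forall>l\<in>{1..k}. Lamlo k l + lamlo k + \<alpha> l - \<beta> l \<ge> 0) \<and>
    (\<forall>k\<in>{1..K}. y0 + \<gamma> * lamhi k + dt * (\<Sum>l=1..k. Lamhi k l) \<le> yhi) \<and>
    (\<forall>k\<in>{1..K}. Lamhi k k \<ge> - ec * x0 k \<and> Lamhi k k \<ge> ec * (xdn k - x0 k) - lamhi k
       \<and> Lamhi k k \<ge> 0)"

text \<open>Single rows of constraints (g), (h) and (i), with a = x^0_l, d = x^down_l,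
  lam = lambda-bar_k and L = Lambda-bar_kl.\<close>

definition g_row :: "real \<Rightarrow> real \<Rightarrow> real \<Rightarrow> real \<Rightarrow> bool" where
  "g_row a d u1 u2 \<longleftrightarrow>
     (1 - u1) * xlo \<le> a - d \<and> a - d \<le> u1 * xhi \<and> u2 * xlo \<le> a \<and> a \<le> (1 - u2) * xhi"

definition h_row :: "real \<Rightarrow> real \<Rightarrow> real \<Rightarrow> real \<Rightarrow> real \<Rightarrow> real \<Rightarrow> bool" where
  "h_row a d lam L u1 u2 \<longleftrightarrow>
     L \<ge> (d - a) / ed - lam + (1 - u1) * (1 / ed - ec) * xlo \<and>
     L \<ge> - a / ed + u2 * (1 / ed - ec) * xlo \<and>
     L \<ge> ec * (d - a) - lam - u1 * (1 / ed - ec) * xhi \<and>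
     L \<ge> - ec * a - (1 - u2) * (1 / ed - ec) * xhi"

definition i_row :: "real \<Rightarrow> real \<Rightarrow> real \<Rightarrow> real \<Rightarrow> real \<Rightarrow> real \<Rightarrow> bool" where
  "i_row a d lam L u1 u2 \<longleftrightarrow>
     L * d + lam * a \<ge> u2 * (xlo * (xhi - xlo) / ed) - u1 * (xhi ^ 2 / (4 * ed))"

definition constraints_g :: "(nat \<Rightarrow> real) \<Rightarrow> (nat \<Rightarrow> real) \<Rightarrow> (nat \<Rightarrow> real) \<Rightarrow> (nat \<Rightarrow> real) \<Rightarrow> bool" where
  "constraints_g x0 xdn u1 u2 \<longleftrightarrow>
     (\<forall>k\<in>{1..K-1}. u1 k \<in> {0, 1} \<and> u2 k \<in> {0, 1} \<and> g_row (x0 k) (xdn k) (u1 k) (u2 k))"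

definition constraints_h ::
  "(nat \<Rightarrow> real) \<Rightarrow> (nat \<Rightarrow> real) \<Rightarrow> (nat \<Rightarrow> real) \<Rightarrow> (nat \<Rightarrow> nat \<Rightarrow> real) \<Rightarrow>
   (nat \<Rightarrow> real) \<Rightarrow> (nat \<Rightarrow> real) \<Rightarrow> bool" where
  "constraints_h x0 xdn lamhi Lamhi u1 u2 \<longleftrightarrow>
     (\<forall>k\<in>{1..K}. \<forall>l\<in>{1..<k}. h_row (x0 l) (xdn l) (lamhi k) (Lamhi k l) (u1 l) (u2 l))"

definition constraints_i ::
  "(nat \<Rightarrow> real) \<Rightarrow> (nat \<Rightarrow> real) \<Rightarrow> (nat \<Rightarrow> real) \<Rightarrow> (nat \<Rightarrow> nat \<Rightarrow> real) \<Rightarrow>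
   (nat \<Rightarrow> real) \<Rightarrow> (nat \<Rightarrow> real) \<Rightarrow> bool" where
  "constraints_i x0 xdn lamhi Lamhi u1 u2 \<longleftrightarrow>
     (\<forall>k\<in>{1..K}. \<forall>l\<in>{1..<k}. i_row (x0 l) (xdn l) (lamhi k) (Lamhi k l) (u1 l) (u2 l))"

definition feasible :: "(nat \<Rightarrow> real) \<Rightarrow> (nat \<Rightarrow> real) \<Rightarrow> (nat \<Rightarrow> real) \<Rightarrow> bool" where
  "feasible x0 xup xdn \<longleftrightarrow> (\<exists>\<alpha> \<beta> lamlo lamhi Lamlo Lamhi u1 u2.
     P_constraints K dt ylo yhi xlo xhi ec ed y0 \<gamma> x0 xup xdn \<alpha> \<beta> lamlo lamhi Lamlo Lamhi u1 u2)"

lemma P_feasible_set_eq: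
  "P_feasible_set K dt ylo yhi xlo xhi ec ed y0 \<gamma> =
     {(x0, xup, xdn). vanishes_outside K x0 xup xdn \<and> feasible x0 xup xdn}"
  unfolding P_feasible_set_def feasible_def ..

lemma P_feasible_subset_eq:
  assumes "\<And>x0 xup xdn. Q x0 xup xdn \<and> feasible x0 xup xdn \<longleftrightarrow> R x0 xup xdn"
  shows "{(x0, xup, xdn) \<in> P_feasible_set K dt ylo yhi xlo xhi ec ed y0 \<gamma>. Q x0 xup xdn} =
    {(x0, xup, xdn). vanishes_outside K x0 xup xdn \<and> R x0 xup xdn}"
  using assms by (auto simp: P_feasible_set_eq)

lemma P_constraints_iff:
  "P_constraints K dt ylo yhi xlo xhi ec ed y0 \<gamma> x0 xup xdn \<alpha> \<beta> lamlo lamhi Lamlo Lamhi u1 u2 \<longleftrightarrow>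
     constraints_a_f x0 xup xdn \<alpha> \<beta> lamlo lamhi Lamlo Lamhi \<and> constraints_g x0 xdn u1 u2 \<and>
     constraints_h x0 xdn lamhi Lamhi u1 u2 \<and> constraints_i x0 xdn lamhi Lamhi u1 u2"
  unfolding P_constraints_def constraints_a_f_def constraints_g_def constraints_h_def
    constraints_i_def g_row_def h_row_def i_row_def Let_def
  by blast

lemma feasible_iff:
  "feasible x0 xup xdn \<longleftrightarrow> (\<exists>\<alpha> \<beta> lamlo lamhi Lamlo Lamhi u1 u2.
     constraints_a_f x0 xup xdn \<alpha> \<beta> lamlo lamhi Lamlo Lamhi \<and> constraints_g x0 xdn u1 u2 \<and>
     constraints_h x0 xdn lamhi Lamhi u1 u2 \<and> constraints_i x0 xdn lamhi Lamhi u1 u2)"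
  unfolding feasible_def P_constraints_iff ..

lemma constraints_a_f_step:
  assumes "constraints_a_f x0 xup xdn \<alpha> \<beta> lamlo lamhi Lamlo Lamhi" "k \<in> {1..K}"
  shows "0 \<le> xdn k" "xlo \<le> x0 k - xdn k" "x0 k \<le> xhi" "0 \<le> lamhi k"
    "0 \<le> Lamhi k k" "- ec * x0 k \<le> Lamhi k k" "ec * (xdn k - x0 k) - lamhi k \<le> Lamhi k k"
proof -
  have "0 \<le> xup k" "x0 k + xup k \<le> xhi"
    using assms unfolding constraints_a_f_def by blast+
  then show "x0 k \<le> xhi" by linarith
  show "0 \<le> xdn k" "xlo \<le> x0 k - xdn k" "0 \<le> lamhi k" "0 \<le> Lamhi k k" "- ec * x0 k \<le> Lamhi k k"
    "ec * (xdn k - x0 k) - lamhi k \<le> Lamhi k k"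
    using assms unfolding constraints_a_f_def by blast+
qed

section \<open>Linear reformulations\<close>

lemma constraints_a_f_lower_lamhi:
  assumes af: "constraints_a_f x0 xup xdn \<alpha> \<beta> lamlo lamhi Lamlo Lamhi"
    and lam': "\<And>k. k \<in> {1..K} \<Longrightarrow>
      0 \<le> lam' k \<and> lam' k \<le> lamhi k \<and> ec * (xdn k - x0 k) - lam' k \<le> Lamhi k k"
  shows "constraints_a_f x0 xup xdn \<alpha> \<beta> lamlo lam' Lamlo Lamhi"
proof -
  have "\<gamma> * lam' k \<le> \<gamma> * lamhi k" if "k \<in> {1..K}" for k
    using lam'[OF that] gamma_nonneg by (simp add: mult_left_mono)
  then have "y0 + \<gamma> * lam' k + dt * (\<Sum>l=1..k. Lamhi k l) \<le> yhi" if "k \<in> {1..K}" for k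
    using af that unfolding constraints_a_f_def by fastforce
  with af lam' show ?thesis
    unfolding constraints_a_f_def by auto
qed

lemma constraints_a_f_cap_lamhi:
  assumes af: "constraints_a_f x0 xup xdn \<alpha> \<beta> lamlo lamhi Lamlo Lamhi" and "0 \<le> c"
    and cap: "\<And>k. k \<in> {1..K} \<Longrightarrow> ec * (xdn k - x0 k) - c \<le> Lamhi k k"
  shows "constraints_a_f x0 xup xdn \<alpha> \<beta> lamlo (\<lambda>k. min (lamhi k) c) Lamlo Lamhi"
  using af
proof (rule constraints_a_f_lower_lamhi)
  fix k
  assume k: "k \<in> {1..K}"
  with constraints_a_f_step(4,7)[OF af k] cap[OF k] \<open>0 \<le> c\<close>
  show "0 \<le> min (lamhi k) c \<and> min (lamhi k) c \<le> lamhi k \<and>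
      ec * (xdn k - x0 k) - min (lamhi k) c \<le> Lamhi k k"
    by (auto simp: min_def)
qed

lemma delta_eta_nonneg: "0 \<le> 1 / ed - ec"
proof -
  have "ec * ed \<le> 1" using ec_le_1 ed_le_1 ed_pos by (simp add: mult_le_one)
  then show ?thesis using ed_pos by (simp add: field_simps)
qed

lemma ec_mult_le_cap: "xlo \<le> a - d \<Longrightarrow> ec * (d - a) \<le> - xlo / ed"
proof -
  assume "xlo \<le> a - d"
  then have "ec * (d - a) \<le> ec * (- xlo)" using ec_pos by (intro mult_left_mono) auto
  also have "\<dots> \<le> - xlo" using ec_le_1 xlo_nonpos by (simp add: mult_le_cancel_right1)
  also have "\<dots> \<le> - xlo / ed"
    using ed_pos ed_le_1 xlo_nonpos by (simp add: field_simps mult_le_cancel_right1 mult_nonpos_nonneg)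
  finally show ?thesis .
qed

lemma g_row_no_down: "g_row a 0 u1 u2 \<Longrightarrow> g_row a 0 (1 - u2) u2"
  unfolding g_row_def by simp

lemma h_row_no_down: "h_row a 0 lam L u1 u2 \<Longrightarrow> h_row a 0 0 L (1 - u2) u2"
  unfolding h_row_def by simp

lemma i_row_no_down: "w \<in> {0, 1} \<Longrightarrow> i_row a 0 0 L (1 - w) w"
  using xlo_nonpos xhi_nonneg ed_pos
  by (auto simp: i_row_def mult_nonpos_nonneg divide_nonpos_pos)

text \<open>For a \<le> 0 the indicators (g) leave a choice only if a = 0, and then also d = 0; in
  either case the rows of (h) for the indicators (0, 1) are implied.\<close>

lemma h_row_charging:
  assumes u: "u1 \<in> {0, 1}" "u2 \<in> {0, 1}" and g: "g_row a d u1 u2"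
    and "0 \<le> d" "0 \<le> lam" "a \<le> 0" and h: "h_row a d lam L u1 u2"
  shows "h_row a d lam L 0 1"
proof -
  have loss: "(1 / ed - ec) * xlo \<le> 0"
    using delta_eta_nonneg xlo_nonpos by (simp add: mult_nonneg_nonpos)
  have row4: "- ec * a \<le> L"
  proof (cases "u2 = 1")
    case True
    with h show ?thesis by (simp add: h_row_def)
  next
    case False
    with u have "u2 = 0" by auto
    with g \<open>a \<le> 0\<close> have "a = 0" by (simp add: g_row_def)
    with h \<open>u2 = 0\<close> show ?thesis by (simp add: h_row_def)
  qed
  have row3: "ec * (d - a) - lam \<le> L"
  proof (cases "u1 = 0")
    case True
    with h show ?thesis by (simp add: h_row_def)
  next
    case False
    with u have "u1 = 1" by auto
    with g \<open>a \<le> 0\<close> \<open>0 \<le> d\<close> have "a = 0" "d = 0" by (auto simp: g_row_def)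
    with row4 \<open>0 \<le> lam\<close> show ?thesis by simp
  qed
  have "(1 / ed - ec) * xlo \<le> (1 - u1) * (1 / ed - ec) * xlo" "(1 / ed - ec) * xlo \<le> u2 * (1 / ed - ec) * xlo"
    using u loss by auto
  with h row3 row4 show ?thesis
    unfolding h_row_def by auto
qed

lemma h_row_i_row_charging_cap:
  assumes "a \<le> 0" "xlo \<le> a - d" "0 \<le> d" "0 \<le> lam" and h: "h_row a d lam L 0 1"
  defines "lam' \<equiv> min lam (- xlo / ed)"
  shows "h_row a d lam' L 0 1 \<and> i_row a d lam' L 0 1"
proof -
  have cap_nonneg: "0 \<le> - xlo / ed"
    using xlo_nonpos ed_pos by (simp add: divide_nonpos_pos)
  have "- ec * a \<le> L" using h by (simp add: h_row_def)
  moreover have "0 \<le> - ec * a" using ec_pos \<open>a \<le> 0\<close> by (simp add: mult_le_0_iff)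
  ultimately have L_nonneg: "0 \<le> L" by linarith
  have "(d - a) / ed + xlo / ed = (d - a + xlo) / ed" by (simp add: add_divide_distrib)
  also have "\<dots> \<le> 0" using \<open>xlo \<le> a - d\<close> ed_pos by (simp add: divide_nonpos_pos)
  moreover have "(1 / ed - ec) * xlo \<le> 0"
    using delta_eta_nonneg xlo_nonpos by (simp add: mult_nonneg_nonpos)
  ultimately have "(d - a) / ed - (- xlo / ed) + (1 - 0) * (1 / ed - ec) * xlo \<le> L"
    using L_nonneg by simp
  moreover have "ec * (d - a) - (- xlo / ed) \<le> L"
    using ec_mult_le_cap[OF \<open>xlo \<le> a - d\<close>] L_nonneg by simp
  ultimately have "h_row a d lam' L 0 1"
    using h by (auto simp: h_row_def lam'_def min_def)
  moreover have "i_row a d lam' L 0 1"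
  proof -
    have lam': "0 \<le> lam'" "lam' \<le> - xlo / ed"
      using cap_nonneg \<open>0 \<le> lam\<close> by (auto simp: lam'_def)
    have "xlo * (xhi - xlo) \<le> - xlo * xlo"
      using mult_nonpos_nonneg[OF xlo_nonpos xhi_nonneg] by (simp add: algebra_simps)
    then have "xlo * (xhi - xlo) / ed \<le> (- xlo / ed) * xlo"
      using ed_pos divide_right_mono[of _ _ ed] by fastforce
    also have "\<dots> \<le> lam' * xlo" using lam' xlo_nonpos by (intro mult_right_mono_neg) auto
    also have "\<dots> \<le> lam' * a" using lam' \<open>xlo \<le> a - d\<close> \<open>0 \<le> d\<close> by (intro mult_left_mono) auto
    also have "\<dots> \<le> L * d + lam' * a" using L_nonneg \<open>0 \<le> d\<close> by simp
    finally show ?thesis by (simp add: i_row_def)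
  qed
  ultimately show ?thesis ..
qed

lemma h_row_lossless: "ec = 1 \<Longrightarrow> ed = 1 \<Longrightarrow> h_row a d lam L u1 u2 \<longleftrightarrow> d - a - lam \<le> L \<and> - a \<le> L"
  unfolding h_row_def by auto

lemma quarter_square_le: "0 \<le> lam \<Longrightarrow> d \<le> (a::real) \<Longrightarrow> - (a ^ 2 / 4) \<le> (d - lam) * (d - a)"
proof -
  assume "0 \<le> lam" "d \<le> a"
  then have "0 \<le> lam * (a - d)" by simp
  moreover have "0 \<le> (a - 2 * d) ^ 2" by simp
  ultimately show ?thesis by (simp add: power2_eq_square algebra_simps)
qed

lemma i_row_lossless:
  assumes "ed = 1" "0 \<le> d" "xlo \<le> a - d" "a \<le> xhi" "0 \<le> lam" "lam \<le> xhi - xlo"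
    and h: "d - a - lam \<le> L" "- a \<le> L"
  shows "i_row a d lam L (if 0 \<le> a - d then 1 else 0) (if a \<le> 0 then 1 else 0)"
proof -
  have "(d - a - lam) * d \<le> L * d" using h(1) \<open>0 \<le> d\<close> by (rule mult_right_mono)
  moreover have "- a * d \<le> L * d" using h(2) \<open>0 \<le> d\<close> by (rule mult_right_mono)
  ultimately have bound1: "(d - lam) * (d - a) \<le> L * d + lam * a"
    and bound2: "a * (lam - d) \<le> L * d + lam * a"
    by (simp_all add: algebra_simps)
  have xlo_xhi: "xlo * (xhi - xlo) \<le> 0"
    using xlo_nonpos xhi_nonneg by (simp add: mult_nonpos_nonneg)
  consider "0 \<le> a - d" "a \<le> 0" | "0 \<le> a - d" "0 < a" | "a - d < 0" "a \<le> 0" | "a - d < 0" "0 < a"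
    by linarith
  then show ?thesis
  proof cases
    case 1
    then have "a = 0" "d = 0" using \<open>0 \<le> d\<close> by auto
    with xlo_xhi show ?thesis unfolding i_row_def by (simp add: \<open>ed = 1\<close> order_trans[OF _ zero_le_power2])
  next
    case 2
    have "a ^ 2 \<le> xhi ^ 2" using 2 \<open>a \<le> xhi\<close> by (intro power_mono) auto
    with 2 bound1 quarter_square_le[OF \<open>0 \<le> lam\<close>, of d a] show ?thesis unfolding i_row_def by (simp add: \<open>ed = 1\<close>)
  next
    case 3
    show ?thesis
    proof (cases "lam \<le> d")
      case True
      with 3 have "0 \<le> (d - lam) * (d - a)" by simp
      with 3 xlo_xhi bound1 show ?thesis unfolding i_row_def by (simp add: \<open>ed = 1\<close>)
    next
      case False
      have "xlo * (xhi - xlo) \<le> xlo * (lam - d)"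
        using False \<open>lam \<le> xhi - xlo\<close> \<open>0 \<le> d\<close> xlo_nonpos by (intro mult_left_mono_neg) auto
      also have "\<dots> \<le> a * (lam - d)"
        using False \<open>xlo \<le> a - d\<close> \<open>0 \<le> d\<close> by (intro mult_right_mono) auto
      finally show ?thesis using bound2 3 unfolding i_row_def by (simp add: \<open>ed = 1\<close>)
    qed
  next
    case 4
    then have "0 \<le> (d - lam) * (d - a) \<or> 0 \<le> a * (lam - d)"
      by (cases "lam \<le> d") simp_all
    with 4 bound1 bound2 show ?thesis unfolding i_row_def by (auto simp: \<open>ed = 1\<close>)
  qed
qed

lemma h_row_i_row_lossless_cap:
  assumes "ec = 1" "ed = 1" "0 \<le> d" "xlo \<le> a - d" "a \<le> xhi" "0 \<le> lam"
    and h: "h_row a d lam L 0 1"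
  defines "lam' \<equiv> min lam (xhi - xlo)"
    and "u1 \<equiv> if 0 \<le> a - d then 1 else 0" and "u2 \<equiv> if a \<le> 0 then 1 else 0"
  shows "h_row a d lam' L u1 u2 \<and> i_row a d lam' L u1 u2"
proof -
  from h have "d - a - lam \<le> L" "- a \<le> L"
    by (simp_all add: h_row_lossless[OF assms(1,2)])
  with \<open>xlo \<le> a - d\<close> \<open>a \<le> xhi\<close> have capped: "d - a - lam' \<le> L"
    by (auto simp: lam'_def min_def)
  have "0 \<le> lam'" "lam' \<le> xhi - xlo"
    using \<open>0 \<le> lam\<close> xlo_nonpos xhi_nonneg by (auto simp: lam'_def)
  with assms(2-5) capped \<open>- a \<le> L\<close> have "i_row a d lam' L u1 u2"
    unfolding u1_def u2_def by (intro i_row_lossless)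
  with capped \<open>- a \<le> L\<close> show ?thesis
    by (simp add: h_row_lossless[OF assms(1,2)])
qed

lemma constraints_g_charging:
  assumes "\<forall>k\<in>{1..K}. x0 k \<le> 0" "constraints_a_f x0 xup xdn \<alpha> \<beta> lamlo lamhi Lamlo Lamhi"
  shows "constraints_g x0 xdn (\<lambda>_. 0) (\<lambda>_. 1)"
  unfolding constraints_g_def
proof
  fix k
  assume "k \<in> {1..K-1}"
  then have k: "k \<in> {1..K}" by auto
  with assms(1) have "x0 k \<le> 0" by blast
  with constraints_a_f_step(1,2)[OF assms(2) k]
  show "0 \<in> {0, 1} \<and> 1 \<in> {0, 1} \<and> g_row (x0 k) (xdn k) 0 1"
    by (auto simp: g_row_def)
qed

lemma constraints_g_sign_indicators:
  assumes "constraints_a_f x0 xup xdn \<alpha> \<beta> lamlo lamhi Lamlo Lamhi"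
  shows "constraints_g x0 xdn (\<lambda>l. if 0 \<le> x0 l - xdn l then 1 else 0) (\<lambda>l. if x0 l \<le> 0 then 1 else 0)"
  unfolding constraints_g_def
proof
  fix k
  assume "k \<in> {1..K-1}"
  then have k: "k \<in> {1..K}" by auto
  from constraints_a_f_step(1-3)[OF assms k]
  show "(if 0 \<le> x0 k - xdn k then 1 else 0) \<in> {0, 1} \<and> (if x0 k \<le> 0 then 1 else 0) \<in> {0, 1} \<and>
      g_row (x0 k) (xdn k) (if 0 \<le> x0 k - xdn k then 1 else 0) (if x0 k \<le> 0 then 1 else 0)"
    by (simp add: g_row_def)
qed

lemma constraints_h_charging:
  assumes charging: "\<forall>k\<in>{1..K}. x0 k \<le> 0"
    and af: "constraints_a_f x0 xup xdn \<alpha> \<beta> lamlo lamhi Lamlo Lamhi"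
    and g: "constraints_g x0 xdn u1 u2" and h: "constraints_h x0 xdn lamhi Lamhi u1 u2"
  shows "constraints_h x0 xdn lamhi Lamhi (\<lambda>_. 0) (\<lambda>_. 1)"
  unfolding constraints_h_def
proof (intro ballI)
  fix k l
  assume kl: "k \<in> {1..K}" "l \<in> {1..<k}"
  then have "l \<in> {1..K-1}" "l \<in> {1..K}" by auto
  with kl g h charging show "h_row (x0 l) (xdn l) (lamhi k) (Lamhi k l) 0 1"
    by (intro h_row_charging[of "u1 l" "u2 l"])
       (auto simp: constraints_g_def constraints_h_def constraints_a_f_step[OF af])
qed

text \<open>For K = 1 and for \<eta>^c = \<eta>^d = 1, constraint (h) does not depend on the indicators, so
  the indicator choice \<upsilon>1 = 0, \<upsilon>2 = 1 of the case x^0 \<le> 0 serves all three linear cases.\<close>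

definition lp_system :: "(nat \<Rightarrow> real) \<Rightarrow> (nat \<Rightarrow> real) \<Rightarrow> (nat \<Rightarrow> real) \<Rightarrow> (nat \<Rightarrow> real) \<Rightarrow> bool" where
  "lp_system x0 xup xdn z \<longleftrightarrow>
     constraints_a_f x0 xup xdn (aux_vec 0 z) (aux_vec 1 z) (aux_vec 2 z) (aux_vec 3 z)
       (aux_mat 4 z) (aux_mat 5 z) \<and>
     constraints_h x0 xdn (aux_vec 3 z) (aux_mat 5 z) (\<lambda>_. 0) (\<lambda>_. 1)"

text \<open>With x^down = 0 one may take \<upsilon>1 = 1 - \<upsilon>2 and lambda-bar = 0.\<close>

definition milp_system ::
  "(nat \<Rightarrow> real) \<Rightarrow> (nat \<Rightarrow> real) \<Rightarrow> (nat \<Rightarrow> real) \<Rightarrow> (nat \<Rightarrow> real) \<Rightarrow> (nat \<Rightarrow> real) \<Rightarrow> bool" where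
  "milp_system x0 xup xdn z w \<longleftrightarrow>
     (\<forall>k\<in>{1..K}. xdn k = 0) \<and>
     constraints_a_f x0 xup xdn (aux_vec 0 z) (aux_vec 1 z) (aux_vec 2 z) (\<lambda>_. 0)
       (aux_mat 4 z) (aux_mat 5 z) \<and>
     (\<forall>k\<in>{1..K-1}. g_row (x0 k) (xdn k) (1 - w k) (w k)) \<and>
     constraints_h x0 xdn (\<lambda>_. 0) (aux_mat 5 z) (\<lambda>l. 1 - w l) w"

lemma polyhedral_lp_system:
  "polyhedral (\<lambda>v. lp_system (coord5 0 v) (coord5 1 v) (coord5 2 v) (coord5 3 v))"
  unfolding lp_system_def constraints_a_f_def constraints_h_def h_row_def
    coord5_def aux_vec_def aux_mat_def
  by (intro polyhedral_intros) auto

lemma polyhedral_milp_system: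
  "polyhedral (\<lambda>v. milp_system (coord5 0 v) (coord5 1 v) (coord5 2 v) (coord5 3 v) (coord5 4 v))"
  unfolding milp_system_def constraints_a_f_def constraints_h_def g_row_def h_row_def
    coord5_def aux_vec_def aux_mat_def
  by (intro polyhedral_intros) auto

lemma ex_lp_system_iff:
  "(\<exists>z. lp_system x0 xup xdn z) \<longleftrightarrow> (\<exists>\<alpha> \<beta> lamlo lamhi Lamlo Lamhi.
     constraints_a_f x0 xup xdn \<alpha> \<beta> lamlo lamhi Lamlo Lamhi \<and>
     constraints_h x0 xdn lamhi Lamhi (\<lambda>_. 0) (\<lambda>_. 1))"
proof
  assume "\<exists>\<alpha> \<beta> lamlo lamhi Lamlo Lamhi. constraints_a_f x0 xup xdn \<alpha> \<beta> lamlo lamhi Lamlo Lamhi \<and>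
     constraints_h x0 xdn lamhi Lamhi (\<lambda>_. 0) (\<lambda>_. 1)"
  then obtain \<alpha> \<beta> lamlo lamhi Lamlo Lamhi where
    "constraints_a_f x0 xup xdn \<alpha> \<beta> lamlo lamhi Lamlo Lamhi"
    "constraints_h x0 xdn lamhi Lamhi (\<lambda>_. 0) (\<lambda>_. 1)"
    by blast
  then have "lp_system x0 xup xdn (pack_aux \<alpha> \<beta> lamlo lamhi Lamlo Lamhi)"
    unfolding lp_system_def aux_pack_aux ..
  then show "\<exists>z. lp_system x0 xup xdn z" by blast
qed (unfold lp_system_def, blast)

lemma no_down_feasible_iff:
  "(\<forall>k\<in>{1..K}. xdn k = 0) \<and> feasible x0 xup xdn \<longleftrightarrow>
     (\<exists>z w. (\<forall>j. w j \<in> {0, 1}) \<and> milp_system x0 xup xdn z w)"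
proof
  assume "(\<forall>k\<in>{1..K}. xdn k = 0) \<and> feasible x0 xup xdn"
  then obtain \<alpha> \<beta> lamlo lamhi Lamlo Lamhi u1 u2 where no_down: "\<forall>k\<in>{1..K}. xdn k = 0"
    and af: "constraints_a_f x0 xup xdn \<alpha> \<beta> lamlo lamhi Lamlo Lamhi"
    and g: "constraints_g x0 xdn u1 u2" and h: "constraints_h x0 xdn lamhi Lamhi u1 u2"
    unfolding feasible_iff by blast
  define w where "w j = (if j \<in> {1..K-1} then u2 j else 0)" for j
  have "constraints_a_f x0 xup xdn \<alpha> \<beta> lamlo (\<lambda>_. 0) Lamlo Lamhi"
    using af by (rule constraints_a_f_lower_lamhi) (use constraints_a_f_step[OF af] no_down in auto)
  moreover have "\<forall>k\<in>{1..K-1}. g_row (x0 k) (xdn k) (1 - w k) (w k)"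
  proof
    fix k
    assume k: "k \<in> {1..K-1}"
    then have "k \<in> {1..K}" by auto
    with no_down have "xdn k = 0" by blast
    moreover have "g_row (x0 k) (xdn k) (u1 k) (u2 k)" "w k = u2 k"
      using g k unfolding constraints_g_def w_def by auto
    ultimately show "g_row (x0 k) (xdn k) (1 - w k) (w k)"
      by (simp add: g_row_no_down)
  qed
  moreover have "constraints_h x0 xdn (\<lambda>_. 0) Lamhi (\<lambda>l. 1 - w l) w"
    using h no_down by (auto simp: constraints_h_def w_def intro: h_row_no_down)
  moreover have "\<forall>j. w j \<in> {0, 1}"
    using g by (simp add: constraints_g_def w_def)
  ultimately have "(\<forall>j. w j \<in> {0, 1}) \<and> milp_system x0 xup xdn (pack_aux \<alpha> \<beta> lamlo (\<lambda>_. 0) Lamlo Lamhi) w"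
    using no_down unfolding milp_system_def aux_pack_aux by blast
  then show "\<exists>z w. (\<forall>j. w j \<in> {0, 1}) \<and> milp_system x0 xup xdn z w" by blast
next
  assume "\<exists>z w. (\<forall>j. w j \<in> {0, 1}) \<and> milp_system x0 xup xdn z w"
  then obtain z w where w: "\<forall>j. w j \<in> {0, 1}" and sys: "milp_system x0 xup xdn z w"
    by blast
  then have no_down: "\<forall>k\<in>{1..K}. xdn k = 0" by (simp add: milp_system_def)
  have "constraints_g x0 xdn (\<lambda>l. 1 - w l) w"
    using w sys by (auto simp: constraints_g_def milp_system_def)
  moreover have "constraints_i x0 xdn (\<lambda>_. 0) (aux_mat 5 z) (\<lambda>l. 1 - w l) w"
    using w no_down by (auto simp: constraints_i_def intro: i_row_no_down)
  ultimately have "feasible x0 xup xdn"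
    using sys unfolding feasible_iff milp_system_def by blast
  with no_down show "(\<forall>k\<in>{1..K}. xdn k = 0) \<and> feasible x0 xup xdn" ..
qed

lemma charging_feasible_iff:
  "(\<forall>k\<in>{1..K}. x0 k \<le> 0) \<and> feasible x0 xup xdn \<longleftrightarrow>
     (\<exists>z. lp_system x0 xup xdn z \<and> (\<forall>k\<in>{1..K}. x0 k \<le> 0))"
proof
  assume "(\<forall>k\<in>{1..K}. x0 k \<le> 0) \<and> feasible x0 xup xdn"
  then obtain \<alpha> \<beta> lamlo lamhi Lamlo Lamhi u1 u2 where charging: "\<forall>k\<in>{1..K}. x0 k \<le> 0"
    and af: "constraints_a_f x0 xup xdn \<alpha> \<beta> lamlo lamhi Lamlo Lamhi"
    and "constraints_g x0 xdn u1 u2" "constraints_h x0 xdn lamhi Lamhi u1 u2"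
    unfolding feasible_iff by blast
  then have "constraints_h x0 xdn lamhi Lamhi (\<lambda>_. 0) (\<lambda>_. 1)"
    by (rule constraints_h_charging)
  with af charging show "\<exists>z. lp_system x0 xup xdn z \<and> (\<forall>k\<in>{1..K}. x0 k \<le> 0)"
    using ex_lp_system_iff by blast
next
  assume "\<exists>z. lp_system x0 xup xdn z \<and> (\<forall>k\<in>{1..K}. x0 k \<le> 0)"
  then obtain \<alpha> \<beta> lamlo lamhi Lamlo Lamhi where charging: "\<forall>k\<in>{1..K}. x0 k \<le> 0"
    and af: "constraints_a_f x0 xup xdn \<alpha> \<beta> lamlo lamhi Lamlo Lamhi"
    and h: "constraints_h x0 xdn lamhi Lamhi (\<lambda>_. 0) (\<lambda>_. 1)"
    using ex_lp_system_iff by blast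
  define lam' where "lam' = (\<lambda>k. min (lamhi k) (- xlo / ed))"
  have "0 \<le> - xlo / ed" using xlo_nonpos ed_pos by (simp add: divide_nonpos_pos)
  with af have "constraints_a_f x0 xup xdn \<alpha> \<beta> lamlo lam' Lamlo Lamhi"
    unfolding lam'_def
    by (rule constraints_a_f_cap_lamhi)
       (use constraints_a_f_step(2,5)[OF af] ec_mult_le_cap in fastforce)
  moreover have "h_row (x0 l) (xdn l) (lam' k) (Lamhi k l) 0 1 \<and>
      i_row (x0 l) (xdn l) (lam' k) (Lamhi k l) 0 1"
    if k: "k \<in> {1..K}" and l: "l \<in> {1..<k}" for k l
  proof -
    have "l \<in> {1..K}" using k l by auto
    with charging constraints_a_f_step[OF af] have "x0 l \<le> 0" "xlo \<le> x0 l - xdn l" "0 \<le> xdn l"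
      by auto
    moreover have "h_row (x0 l) (xdn l) (lamhi k) (Lamhi k l) 0 1"
      using h k l by (simp add: constraints_h_def)
    ultimately show ?thesis
      unfolding lam'_def using constraints_a_f_step(4)[OF af k] by (intro h_row_i_row_charging_cap)
  qed
  then have "constraints_h x0 xdn lam' Lamhi (\<lambda>_. 0) (\<lambda>_. 1) \<and>
      constraints_i x0 xdn lam' Lamhi (\<lambda>_. 0) (\<lambda>_. 1)"
    by (simp add: constraints_h_def constraints_i_def)
  moreover have "constraints_g x0 xdn (\<lambda>_. 0) (\<lambda>_. 1)"
    using charging af by (rule constraints_g_charging)
  ultimately have "feasible x0 xup xdn"
    unfolding feasible_iff by blast
  with charging show "(\<forall>k\<in>{1..K}. x0 k \<le> 0) \<and> feasible x0 xup xdn" ..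
qed

lemma single_step_feasible_iff:
  assumes "K = 1"
  shows "feasible x0 xup xdn \<longleftrightarrow> (\<exists>z. lp_system x0 xup xdn z)"
proof -
  have "constraints_g x0 xdn u1 u2" "constraints_h x0 xdn lam Lam u1 u2"
    "constraints_i x0 xdn lam Lam u1 u2" for u1 u2 lam Lam
    unfolding constraints_g_def constraints_h_def constraints_i_def using assms by simp_all
  then show ?thesis
    unfolding feasible_iff ex_lp_system_iff by blast
qed

lemma lossless_feasible_iff:
  assumes "ec = 1" "ed = 1"
  shows "feasible x0 xup xdn \<longleftrightarrow> (\<exists>z. lp_system x0 xup xdn z)"
proof
  assume "feasible x0 xup xdn"
  then obtain \<alpha> \<beta> lamlo lamhi Lamlo Lamhi u1 u2 where
    af: "constraints_a_f x0 xup xdn \<alpha> \<beta> lamlo lamhi Lamlo Lamhi"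
    and h: "constraints_h x0 xdn lamhi Lamhi u1 u2"
    unfolding feasible_iff by blast
  from h have "constraints_h x0 xdn lamhi Lamhi (\<lambda>_. 0) (\<lambda>_. 1)"
    by (simp add: constraints_h_def h_row_lossless[OF assms])
  with af show "\<exists>z. lp_system x0 xup xdn z"
    using ex_lp_system_iff by blast
next
  assume "\<exists>z. lp_system x0 xup xdn z"
  then obtain \<alpha> \<beta> lamlo lamhi Lamlo Lamhi where
    af: "constraints_a_f x0 xup xdn \<alpha> \<beta> lamlo lamhi Lamlo Lamhi"
    and h: "constraints_h x0 xdn lamhi Lamhi (\<lambda>_. 0) (\<lambda>_. 1)"
    using ex_lp_system_iff by blast
  define lam' where "lam' = (\<lambda>k. min (lamhi k) (xhi - xlo))"
  define u1 where "u1 = (\<lambda>l. if 0 \<le> x0 l - xdn l then 1 else 0 :: real)"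
  define u2 where "u2 = (\<lambda>l. if x0 l \<le> 0 then 1 else 0 :: real)"
  have "0 \<le> xhi - xlo" using xlo_nonpos xhi_nonneg by simp
  with af have "constraints_a_f x0 xup xdn \<alpha> \<beta> lamlo lam' Lamlo Lamhi"
    unfolding lam'_def
    by (rule constraints_a_f_cap_lamhi) (use constraints_a_f_step(1-3,6)[OF af] assms in force)
  moreover have "h_row (x0 l) (xdn l) (lam' k) (Lamhi k l) (u1 l) (u2 l) \<and>
      i_row (x0 l) (xdn l) (lam' k) (Lamhi k l) (u1 l) (u2 l)"
    if k: "k \<in> {1..K}" and l: "l \<in> {1..<k}" for k l
  proof -
    have "l \<in> {1..K}" using k l by auto
    moreover have "h_row (x0 l) (xdn l) (lamhi k) (Lamhi k l) 0 1"
      using h k l by (simp add: constraints_h_def)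
    ultimately show ?thesis
      unfolding lam'_def u1_def u2_def
      using constraints_a_f_step(1-4)[OF af] k by (intro h_row_i_row_lossless_cap assms) auto
  qed
  then have "constraints_h x0 xdn lam' Lamhi u1 u2 \<and> constraints_i x0 xdn lam' Lamhi u1 u2"
    by (simp add: constraints_h_def constraints_i_def)
  moreover have "constraints_g x0 xdn u1 u2"
    unfolding u1_def u2_def using af by (rule constraints_g_sign_indicators)
  ultimately show "feasible x0 xup xdn"
    unfolding feasible_iff by blast
qed

lemma milp_representable_no_down:
  "milp_representable K
     {(x0, xup, xdn) \<in> P_feasible_set K dt ylo yhi xlo xhi ec ed y0 \<gamma>. \<forall>k\<in>{1..K}. xdn k = 0}"
  unfolding P_feasible_subset_eq[OF no_down_feasible_iff]
  by (rule milp_representable_intro[OF polyhedral_milp_system])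

lemma lp_representable_charging:
  "lp_representable K
     {(x0, xup, xdn) \<in> P_feasible_set K dt ylo yhi xlo xhi ec ed y0 \<gamma>. \<forall>k\<in>{1..K}. x0 k \<le> 0}"
proof -
  have "polyhedral (\<lambda>v. lp_system (coord5 0 v) (coord5 1 v) (coord5 2 v) (coord5 3 v) \<and>
      (\<forall>k\<in>{1..K}. coord5 0 v k \<le> 0))"
    by (intro polyhedral_conj polyhedral_lp_system polyhedral_ball polyhedral_le)
       (auto simp: coord5_def intro: affine_form_coord affine_form_const)
  then show ?thesis
    unfolding P_feasible_subset_eq[OF charging_feasible_iff]
    by (rule lp_representable_intro)
qed

lemma lp_representable_single_step:
  "K = 1 \<Longrightarrow> lp_representable K (P_feasible_set K dt ylo yhi xlo xhi ec ed y0 \<gamma>)"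
  unfolding P_feasible_set_eq single_step_feasible_iff
  by (rule lp_representable_intro[OF polyhedral_lp_system])

lemma lp_representable_lossless:
  "ec = 1 \<Longrightarrow> ed = 1 \<Longrightarrow> lp_representable K (P_feasible_set K dt ylo yhi xlo xhi ec ed y0 \<gamma>)"
  unfolding P_feasible_set_eq lossless_feasible_iff
  by (rule lp_representable_intro[OF polyhedral_lp_system])

end

theorem proposition8:
  fixes K :: nat and dt ylo yhi xlo xhi ec ed y0 \<gamma> :: real
  assumes "K \<ge> 1" and "dt > 0"
    and "0 \<le> ylo" and "ylo \<le> yhi" and "xlo \<le> 0" and "0 \<le> xhi"
    and "0 < ec" and "ec \<le> 1" and "0 < ed" and "ed \<le> 1"
    and "y0 \<ge> 0" and "0 \<le> \<gamma>" and "\<gamma> \<le> real K * dt"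
  shows "milp_representable K
           {(x0, xup, xdn) \<in> P_feasible_set K dt ylo yhi xlo xhi ec ed y0 \<gamma>.
              \<forall>k\<in>{1..K}. xdn k = 0}
       \<and> lp_representable K
           {(x0, xup, xdn) \<in> P_feasible_set K dt ylo yhi xlo xhi ec ed y0 \<gamma>.
              \<forall>k\<in>{1..K}. x0 k \<le> 0}
       \<and> (K = 1 \<longrightarrow> lp_representable K (P_feasible_set K dt ylo yhi xlo xhi ec ed y0 \<gamma>))
       \<and> (ec = 1 \<and> ed = 1 \<longrightarrow>
            lp_representable K (P_feasible_set K dt ylo yhi xlo xhi ec ed y0 \<gamma>))"
proof -
  interpret storage_problem K dt ylo yhi xlo xhi ec ed y0 \<gamma>
    using assms by unfold_locales auto
  show ?thesis
    by (intro conjI impI milp_representable_no_down lp_representable_charging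
        lp_representable_single_step lp_representable_lossless) auto
qed

end
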